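(* Let $0\to N\to G\xrightarrow{p} Q\to 1$ be a short exact sequence of groups with $N$ abelian (written additively), and let $C_G(N)$ be the centralizer of $N$ in $G$, a $Q$-group via $p(x)\cdot g=x+g-x$. Let $End^N(G)$ be the set of endomorphisms $\alpha$ of $G$ with $\alpha|_N=\mathrm{id}_N$. Then there is a bijection $End^N(G)\to Z^1(Q,C_G(N))$ sending $\alpha$ to the map $\psi$ determined by $\alpha(x)=\psi(p(x))+x$ for $x\in G$.
   Context: For a group $Q$ acting on a (not necessarily abelian) group $U$, $Z^1(Q,U)$ is the set of crossed homomorphisms $\psi:Q\to U$, i.e. $\psi(x+y)=\psi(x)+x\cdot\psi(y)$. *)

theory Defs
  imports "HOL-Algebra.Algebra"
begin

definition centralizer_set :: "('a, 'b) monoid_scheme \<Rightarrow> 'a set \<Rightarrow> 'a set" where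
  "centralizer_set G N = {g \<in> carrier G. \<forall>n\<in>N. g \<otimes>\<^bsub>G\<^esub> n = n \<otimes>\<^bsub>G\<^esub> g}"

definition conj_action :: "('a, 'b) monoid_scheme \<Rightarrow> ('a \<Rightarrow> 'q) \<Rightarrow> 'q \<Rightarrow> 'a \<Rightarrow> 'a" where
  "conj_action G p q g =
     (let x = (SOME x. x \<in> carrier G \<and> p x = q) in x \<otimes>\<^bsub>G\<^esub> g \<otimes>\<^bsub>G\<^esub> inv\<^bsub>G\<^esub> x)"

definition Z1 :: "('q, 'c) monoid_scheme \<Rightarrow> ('u, 'd) monoid_scheme \<Rightarrow> ('q \<Rightarrow> 'u \<Rightarrow> 'u)
                   \<Rightarrow> ('q \<Rightarrow> 'u) set" where
  "Z1 Q U act = {\<psi> \<in> carrier Q \<rightarrow>\<^sub>E carrier U.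
      \<forall>x\<in>carrier Q. \<forall>y\<in>carrier Q.
        \<psi> (x \<otimes>\<^bsub>Q\<^esub> y) = \<psi> x \<otimes>\<^bsub>U\<^esub> act x (\<psi> y)}"

definition EndN :: "('a, 'b) monoid_scheme \<Rightarrow> 'a set \<Rightarrow> ('a \<Rightarrow> 'a) set" where
  "EndN G N = {\<alpha> \<in> hom G G. \<alpha> \<in> extensional (carrier G) \<and> (\<forall>n\<in>N. \<alpha> n = n)}"

end

theory Submission
  imports Defs
begin

text \<open>Put \<open>\<psi>(x) = \<alpha>(x) x\<inverse>\<close>. Since \<open>\<alpha>\<close> fixes the normal subgroup \<open>N\<close> pointwise,
  \<open>\<psi>(x n) = \<psi>(x)\<close> for \<open>n \<in> N\<close>, so \<open>\<psi>\<close> factors through \<open>p\<close>; and \<open>\<alpha>(x)\<close>, \<open>x\<close> act alike on \<open>N\<close> by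
  conjugation (\<open>\<alpha>\<close> fixes \<open>x\<inverse> n x\<close>), so \<open>\<psi>(x)\<close> centralizes \<open>N\<close>. The homomorphism property of \<open>\<alpha>\<close>
  becomes the crossed-homomorphism identity for the conjugation action, and \<open>\<psi> \<mapsto> (x \<mapsto> \<psi>(p x) x)\<close>
  is the inverse map.\<close>

definition cocycle_of_endo ::
    "('a, 'b) monoid_scheme \<Rightarrow> ('q, 'c) monoid_scheme \<Rightarrow> ('a \<Rightarrow> 'q) \<Rightarrow> ('a \<Rightarrow> 'a) \<Rightarrow> 'q \<Rightarrow> 'a" where
  "cocycle_of_endo G Q p \<alpha> =
     (\<lambda>q\<in>carrier Q. let x = (SOME x. x \<in> carrier G \<and> p x = q) in \<alpha> x \<otimes>\<^bsub>G\<^esub> inv\<^bsub>G\<^esub> x)"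

definition endo_of_cocycle :: "('a, 'b) monoid_scheme \<Rightarrow> ('a \<Rightarrow> 'q) \<Rightarrow> ('q \<Rightarrow> 'a) \<Rightarrow> 'a \<Rightarrow> 'a" where
  "endo_of_cocycle G p \<psi> = (\<lambda>x\<in>carrier G. \<psi> (p x) \<otimes>\<^bsub>G\<^esub> x)"

lemma (in group) mult_inv_cancel_left [simp]:
  assumes "x \<in> carrier G" "y \<in> carrier G"
  shows "x \<otimes> (inv x \<otimes> y) = y" and "inv x \<otimes> (x \<otimes> y) = y"
  using assms by (simp_all add: m_assoc [symmetric])

lemma (in group) conj_mult_commuting_eq:
  assumes "x \<in> carrier G" "n \<in> carrier G" "c \<in> carrier G" "c \<otimes> n = n \<otimes> c"
  shows "x \<otimes> n \<otimes> c \<otimes> inv (x \<otimes> n) = x \<otimes> c \<otimes> inv x"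
proof -
  have "x \<otimes> n \<otimes> c \<otimes> inv (x \<otimes> n) = x \<otimes> (c \<otimes> n) \<otimes> inv n \<otimes> inv x"
    using assms by (simp add: inv_mult_group m_assoc)
  also have "\<dots> = x \<otimes> c \<otimes> inv x"
    using assms(1-3) by (simp add: m_assoc)
  finally show ?thesis .
qed

lemma (in group) hom_mult_inv_right_fixed:
  assumes "\<alpha> \<in> hom G G" "x \<in> carrier G" "n \<in> carrier G" "\<alpha> n = n"
  shows "\<alpha> (x \<otimes> n) \<otimes> inv (x \<otimes> n) = \<alpha> x \<otimes> inv x"
proof -
  have "\<alpha> x \<in> carrier G" using assms by (auto simp: hom_def)
  with assms show ?thesis by (simp add: hom_mult inv_mult_group m_assoc)
qed

lemma (in group) hom_fixing_normal_mult_inv_in_centralizer: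
  assumes N: "N \<lhd> G" and \<alpha>: "\<alpha> \<in> hom G G" "\<forall>n\<in>N. \<alpha> n = n" and x: "x \<in> carrier G"
  shows "\<alpha> x \<otimes> inv x \<in> centralizer_set G N"
proof -
  interpret N: normal N G by (fact N)
  interpret \<alpha>: group_hom G G \<alpha> using \<alpha>(1) by unfold_locales
  have ax: "\<alpha> x \<in> carrier G" using x by simp
  have "\<alpha> x \<otimes> inv x \<otimes> n = n \<otimes> (\<alpha> x \<otimes> inv x)" if n: "n \<in> N" for n
  proof -
    have nG: "n \<in> carrier G" using n N.subset by blast
    \<comment> \<open>\<open>\<alpha>\<close> fixes the conjugate \<open>x\<inverse> n x \<in> N\<close>, so \<open>\<alpha> x\<close> and \<open>x\<close> conjugate \<open>n\<close> alike.\<close>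
    have "\<alpha> (inv x \<otimes> n \<otimes> x) = inv x \<otimes> n \<otimes> x"
      using \<alpha>(2) N.inv_op_closed1[OF x n] by blast
    then have conj: "inv (\<alpha> x) \<otimes> n \<otimes> \<alpha> x = inv x \<otimes> n \<otimes> x"
      using x nG \<alpha>(2) n by simp
    have "\<alpha> x \<otimes> inv x \<otimes> n = \<alpha> x \<otimes> (inv x \<otimes> n \<otimes> x) \<otimes> inv x"
      using x nG by (simp add: m_assoc)
    also have "\<dots> = \<alpha> x \<otimes> (inv (\<alpha> x) \<otimes> n \<otimes> \<alpha> x) \<otimes> inv x"
      by (simp only: conj)
    also have "\<dots> = n \<otimes> (\<alpha> x \<otimes> inv x)"
      using x nG ax by (simp add: m_assoc)
    finally show ?thesis .
  qed
  then show ?thesis using x ax by (auto simp: centralizer_set_def)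
qed

locale group_extension = group_hom G Q p
  for G (structure) and Q (structure) and p +
  assumes surj: "p ` carrier G = carrier Q"
begin

abbreviation (input) K where "K \<equiv> kernel G Q p"

abbreviation (input) C where "C \<equiv> centralizer_set G K"

abbreviation (input) crossed_homs where
  "crossed_homs \<equiv> Z1 Q (G\<lparr>carrier := C\<rparr>) (conj_action G p)"

lemma kernel_iff: "n \<in> K \<longleftrightarrow> n \<in> carrier G \<and> p n = \<one>\<^bsub>Q\<^esub>"
  by (simp add: kernel_def)

lemma obtain_preimage:
  assumes "q \<in> carrier Q"
  obtains x where "x \<in> carrier G" "q = p x"
  using assms surj by blast

lemma chosen_preimage_eq_mult_kernel:
  assumes x: "x \<in> carrier G"
  obtains n where "n \<in> K" "(SOME y. y \<in> carrier G \<and> p y = p x) = x \<otimes> n"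
proof -
  let ?y = "SOME y. y \<in> carrier G \<and> p y = p x"
  have y: "?y \<in> carrier G \<and> p ?y = p x"
    using x by (intro someI_ex[where P = "\<lambda>y. y \<in> carrier G \<and> p y = p x"]) blast
  have "inv x \<otimes> ?y \<in> K" using x y by (simp add: kernel_iff)
  moreover have "?y = x \<otimes> (inv x \<otimes> ?y)" using x y by (simp add: G.m_assoc[symmetric])
  ultimately show thesis by (rule that)
qed

lemma conj_action_image:
  assumes "x \<in> carrier G" "c \<in> C"
  shows "conj_action G p (p x) c = x \<otimes> c \<otimes> inv x"
proof -
  obtain n where n: "n \<in> K" "(SOME y. y \<in> carrier G \<and> p y = p x) = x \<otimes> n"
    using chosen_preimage_eq_mult_kernel[OF assms(1)] .
  then show ?thesis using assms G.conj_mult_commuting_eq[of x n c]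
    by (simp add: conj_action_def centralizer_set_def kernel_iff)
qed

lemma cocycle_of_endo_image:
  assumes "\<alpha> \<in> EndN G K" "x \<in> carrier G"
  shows "cocycle_of_endo G Q p \<alpha> (p x) = \<alpha> x \<otimes> inv x"
proof -
  obtain n where n: "n \<in> K" "(SOME y. y \<in> carrier G \<and> p y = p x) = x \<otimes> n"
    using chosen_preimage_eq_mult_kernel[OF assms(2)] .
  then show ?thesis using assms G.hom_mult_inv_right_fixed[of \<alpha> x n]
    by (simp add: cocycle_of_endo_def EndN_def kernel_iff)
qed

lemma EndN_mult_inv_in_centralizer:
  assumes "\<alpha> \<in> EndN G K" "x \<in> carrier G"
  shows "\<alpha> x \<otimes> inv x \<in> C"
  using assms normal_kernel by (simp add: G.hom_fixing_normal_mult_inv_in_centralizer EndN_def)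

lemma cocycle_of_endo_in_crossed_homs:
  assumes \<alpha>: "\<alpha> \<in> EndN G K"
  shows "cocycle_of_endo G Q p \<alpha> \<in> crossed_homs"
proof -
  let ?\<psi> = "cocycle_of_endo G Q p \<alpha>"
  have hom: "\<alpha> \<in> hom G G" using \<alpha> by (simp add: EndN_def)
  have "?\<psi> \<in> carrier Q \<rightarrow>\<^sub>E C"
  proof
    fix q assume "q \<in> carrier Q"
    then obtain x where "x \<in> carrier G" "q = p x" by (rule obtain_preimage)
    then show "?\<psi> q \<in> C"
      by (simp add: cocycle_of_endo_image[OF \<alpha>] EndN_mult_inv_in_centralizer[OF \<alpha>])
  qed (simp add: cocycle_of_endo_def)
  moreover have "?\<psi> (q \<otimes>\<^bsub>Q\<^esub> q') = ?\<psi> q \<otimes> conj_action G p q (?\<psi> q')"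
    if "q \<in> carrier Q" and "q' \<in> carrier Q" for q q'
  proof -
    obtain x where x: "x \<in> carrier G" "q = p x" using \<open>q \<in> carrier Q\<close> by (rule obtain_preimage)
    obtain y where y: "y \<in> carrier G" "q' = p y" using \<open>q' \<in> carrier Q\<close> by (rule obtain_preimage)
    have \<alpha>xy: "\<alpha> x \<in> carrier G" "\<alpha> y \<in> carrier G" using hom x(1) y(1) by (auto simp: hom_def)
    have "?\<psi> (q \<otimes>\<^bsub>Q\<^esub> q') = ?\<psi> (p (x \<otimes> y))"
      using x y by simp
    also have "\<dots> = \<alpha> (x \<otimes> y) \<otimes> inv (x \<otimes> y)"
      using x y by (intro cocycle_of_endo_image[OF \<alpha>]) simp
    also have "\<dots> = (\<alpha> x \<otimes> inv x) \<otimes> (x \<otimes> (\<alpha> y \<otimes> inv y) \<otimes> inv x)"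
      using x y \<alpha>xy by (simp add: Group.hom_mult[OF hom] G.inv_mult_group G.m_assoc)
    also have "\<dots> = ?\<psi> q \<otimes> conj_action G p q (?\<psi> q')"
      unfolding x(2) y(2) cocycle_of_endo_image[OF \<alpha> x(1)] cocycle_of_endo_image[OF \<alpha> y(1)]
        conj_action_image[OF x(1) EndN_mult_inv_in_centralizer[OF \<alpha> y(1)]] ..
    finally show ?thesis .
  qed
  ultimately show ?thesis by (simp add: Z1_def)
qed

lemma crossed_hom_in_centralizer: "\<psi> \<in> crossed_homs \<Longrightarrow> q \<in> carrier Q \<Longrightarrow> \<psi> q \<in> C"
  by (auto simp: Z1_def)

lemma crossed_hom_mult:
  "\<psi> \<in> crossed_homs \<Longrightarrow> q \<in> carrier Q \<Longrightarrow> q' \<in> carrier Q \<Longrightarrow>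
    \<psi> (q \<otimes>\<^bsub>Q\<^esub> q') = \<psi> q \<otimes> conj_action G p q (\<psi> q')"
  by (simp add: Z1_def)

lemma crossed_hom_one:
  assumes \<psi>: "\<psi> \<in> crossed_homs"
  shows "\<psi> \<one>\<^bsub>Q\<^esub> = \<one>"
proof -
  have c: "\<psi> \<one>\<^bsub>Q\<^esub> \<in> C" by (rule crossed_hom_in_centralizer[OF \<psi> H.one_closed])
  then have cG: "\<psi> \<one>\<^bsub>Q\<^esub> \<in> carrier G" by (simp add: centralizer_set_def)
  have "conj_action G p (p \<one>) (\<psi> \<one>\<^bsub>Q\<^esub>) = \<psi> \<one>\<^bsub>Q\<^esub>"
    using conj_action_image[OF G.one_closed c] cG by simp
  then have "\<psi> \<one>\<^bsub>Q\<^esub> = \<psi> \<one>\<^bsub>Q\<^esub> \<otimes> \<psi> \<one>\<^bsub>Q\<^esub>"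
    using crossed_hom_mult[OF \<psi> H.one_closed H.one_closed] by simp
  then show ?thesis using cG by simp
qed

lemma endo_of_cocycle_in_EndN:
  assumes \<psi>: "\<psi> \<in> crossed_homs"
  shows "endo_of_cocycle G p \<psi> \<in> EndN G K"
proof -
  have \<psi>G: "\<psi> (p x) \<in> carrier G" if "x \<in> carrier G" for x
    using crossed_hom_in_centralizer[OF \<psi>, of "p x"] that by (simp add: centralizer_set_def)
  have "endo_of_cocycle G p \<psi> \<in> hom G G"
  proof (rule homI)
    fix x assume "x \<in> carrier G"
    then show "endo_of_cocycle G p \<psi> x \<in> carrier G" by (simp add: endo_of_cocycle_def \<psi>G)
  next
    fix x y assume x: "x \<in> carrier G" and y: "y \<in> carrier G"
    have \<psi>y: "\<psi> (p y) \<in> C" using y by (simp add: crossed_hom_in_centralizer[OF \<psi>])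
    have "endo_of_cocycle G p \<psi> (x \<otimes> y) = \<psi> (p x \<otimes>\<^bsub>Q\<^esub> p y) \<otimes> (x \<otimes> y)"
      using x y by (simp add: endo_of_cocycle_def)
    also have "\<dots> = \<psi> (p x) \<otimes> (x \<otimes> \<psi> (p y) \<otimes> inv x) \<otimes> (x \<otimes> y)"
      using x y by (simp add: crossed_hom_mult[OF \<psi>] conj_action_image[OF x \<psi>y])
    also have "\<dots> = endo_of_cocycle G p \<psi> x \<otimes> endo_of_cocycle G p \<psi> y"
      using x y \<psi>G[OF x] \<psi>G[OF y] by (simp add: endo_of_cocycle_def G.m_assoc)
    finally show "endo_of_cocycle G p \<psi> (x \<otimes> y) = endo_of_cocycle G p \<psi> x \<otimes> endo_of_cocycle G p \<psi> y" .
  qed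
  moreover have "endo_of_cocycle G p \<psi> n = n" if "n \<in> K" for n
    using that by (simp add: endo_of_cocycle_def kernel_iff crossed_hom_one[OF \<psi>])
  ultimately show ?thesis by (simp add: EndN_def endo_of_cocycle_def)
qed

lemma endo_eq_cocycle_of_endo_mult:
  assumes \<alpha>: "\<alpha> \<in> EndN G K" and x: "x \<in> carrier G"
  shows "\<alpha> x = cocycle_of_endo G Q p \<alpha> (p x) \<otimes> x"
proof -
  have "\<alpha> x \<in> carrier G" using \<alpha> x by (auto simp: EndN_def hom_def)
  with x show ?thesis by (simp add: cocycle_of_endo_image[OF \<alpha>] G.m_assoc)
qed

lemma endo_of_cocycle_of_endo:
  assumes \<alpha>: "\<alpha> \<in> EndN G K"
  shows "endo_of_cocycle G p (cocycle_of_endo G Q p \<alpha>) = \<alpha>"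
proof
  fix x show "endo_of_cocycle G p (cocycle_of_endo G Q p \<alpha>) x = \<alpha> x"
  proof (cases "x \<in> carrier G")
    case True
    then show ?thesis by (simp add: endo_of_cocycle_def endo_eq_cocycle_of_endo_mult[OF \<alpha>])
  next
    case False
    then show ?thesis using \<alpha> by (simp add: endo_of_cocycle_def EndN_def extensional_def)
  qed
qed

lemma cocycle_of_endo_of_cocycle:
  assumes \<psi>: "\<psi> \<in> crossed_homs"
  shows "cocycle_of_endo G Q p (endo_of_cocycle G p \<psi>) = \<psi>"
proof
  fix q show "cocycle_of_endo G Q p (endo_of_cocycle G p \<psi>) q = \<psi> q"
  proof (cases "q \<in> carrier Q")
    case True
    then obtain x where x: "x \<in> carrier G" "q = p x" by (rule obtain_preimage)
    have "\<psi> q \<in> carrier G"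
      using crossed_hom_in_centralizer[OF \<psi> True] by (simp add: centralizer_set_def)
    moreover have "cocycle_of_endo G Q p (endo_of_cocycle G p \<psi>) (p x) =
        endo_of_cocycle G p \<psi> x \<otimes> inv x"
      by (rule cocycle_of_endo_image[OF endo_of_cocycle_in_EndN[OF \<psi>] x(1)])
    ultimately show ?thesis using x by (simp add: endo_of_cocycle_def G.m_assoc)
  next
    case False
    then show ?thesis using \<psi> by (auto simp: cocycle_of_endo_def Z1_def)
  qed
qed

lemma bij_betw_cocycle_of_endo: "bij_betw (cocycle_of_endo G Q p) (EndN G K) crossed_homs"
  by (rule bij_betw_byWitness[where f' = "endo_of_cocycle G p"])
     (auto simp: endo_of_cocycle_of_endo cocycle_of_endo_of_cocycle
                 cocycle_of_endo_in_crossed_homs endo_of_cocycle_in_EndN)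

end

theorem lemma15:
  fixes G :: "('a, 'b) monoid_scheme" and Q :: "('q, 'c) monoid_scheme"
    and N :: "'a set" and p :: "'a \<Rightarrow> 'q"
  assumes "group G" and "group Q"
    and "p \<in> hom G Q" and "p ` carrier G = carrier Q"
    and "kernel G Q p = N"
    and "\<forall>a\<in>N. \<forall>b\<in>N. a \<otimes>\<^bsub>G\<^esub> b = b \<otimes>\<^bsub>G\<^esub> a"
  shows "\<exists>\<Phi>. bij_betw \<Phi> (EndN G N)
              (Z1 Q (G\<lparr>carrier := centralizer_set G N\<rparr>) (conj_action G p))
           \<and> (\<forall>\<alpha>\<in>EndN G N. \<forall>x\<in>carrier G. \<alpha> x = \<Phi> \<alpha> (p x) \<otimes>\<^bsub>G\<^esub> x)"
proof -
  interpret group_extension G Q p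
    using assms(1-4) by (simp add: group_extension_def group_extension_axioms_def
                                   group_hom_def group_hom_axioms_def)
  show ?thesis
    unfolding assms(5) [symmetric]
    using bij_betw_cocycle_of_endo endo_eq_cocycle_of_endo_mult by blast
qed

end
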